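(* Let $C\subseteq\mathbb{F}_q^n$ be a constant weight linear code. Let $C'$ be a subcode of $C$ and $c\in C$ a codeword. Then $c\in C'$ if and only if $\mathrm{Supp}(c)\subseteq\mathrm{Supp}(C')$.
   Context: A subcode is a linear subspace. For a subcode $D$, $\mathrm{Supp}(D)=\{x\in\{1,\dots,n\}: \exists d\in D,\ d_x\neq0\}$, and $\mathrm{Supp}(c)$ is the support of the subcode spanned by $c$. A constant weight code is a linear code all of whose non-zero codewords have the same number of non-zero coordinates. *)

theory Defs
  imports "HOL-Analysis.Analysis"
begin

text \<open>Vectors of F_q^n are modelled as 'a ^ 'n with 'a a finite field and
  'n a finite index type (n = CARD('n)).\<close>

definition is_subcode :: "('a::field ^ 'n) set \<Rightarrow> bool" where
  "is_subcode D \<longleftrightarrow> 0 \<in> D \<and> (\<forall>x\<in>D. \<forall>y\<in>D. x + y \<in> D) \<and> (\<forall>t. \<forall>x\<in>D. t *s x \<in> D)"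

definition code_supp :: "('a::zero ^ 'n) set \<Rightarrow> 'n set" where
  "code_supp D = {i. \<exists>d\<in>D. d $ i \<noteq> 0}"

definition span_one :: "'a::field ^ 'n \<Rightarrow> ('a ^ 'n) set" where
  "span_one c = {t *s c | t. True}"

definition vec_supp :: "'a::field ^ 'n \<Rightarrow> 'n set" where
  "vec_supp c = code_supp (span_one c)"

definition hweight :: "'a::zero ^ 'n \<Rightarrow> nat" where
  "hweight c = card {i. c $ i \<noteq> 0}"

definition constant_weight :: "('a::zero ^ 'n) set \<Rightarrow> bool" where
  "constant_weight C \<longleftrightarrow> (\<exists>w. \<forall>c\<in>C. c \<noteq> 0 \<longrightarrow> hweight c = w)"

end

theory Submission
  imports Defs
begin

text \<open>Suppose \<open>c \<notin> C'\<close> although every coordinate where \<open>c\<close> is nonzero lies in \<open>Supp(C')\<close>.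
  On each coordinate of \<open>Supp(C')\<close> the coordinate map \<open>C' \<rightarrow> F\<^sub>q\<close> is onto, so a translation of
  \<open>C'\<close> moves the value of \<open>c\<close> there; hence the coset \<open>C' + c\<close> and \<open>C'\<close> have the same total
  weight. All \<open>|C'|\<close> words of the coset are nonzero codewords of \<open>C\<close>, whereas \<open>C'\<close> has only
  \<open>|C'| - 1\<close> of them, so the common weight \<open>w\<close> satisfies \<open>|C'| w = (|C'| - 1) w\<close>. Thus \<open>w = 0\<close>,
  forcing \<open>c = 0 \<in> C'\<close>.\<close>

lemma is_subcode_iff_subspace: "is_subcode D \<longleftrightarrow> vec.subspace D"
  by (simp add: is_subcode_def vec.subspace_def)

lemma vec_supp_eq: "vec_supp c = {i. c $ i \<noteq> 0}"
proof -
  have "c = 1 *s c" by simp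
  then show ?thesis
    unfolding vec_supp_def code_supp_def span_one_def by force
qed

lemma hweight_eq_sum: "hweight x = (\<Sum>i\<in>UNIV. of_bool (x $ i \<noteq> 0))"
  by (simp add: hweight_def sum_of_bool_eq)

lemma hweight_eq_0_iff: "hweight x = 0 \<longleftrightarrow> x = 0"
  by (simp add: hweight_def vec_eq_iff)

lemma sum_subspace_translate:
  fixes D :: "('a::field ^ 'n) set"
  assumes "vec.subspace D" and "e \<in> D"
  shows "(\<Sum>x\<in>D. g (x + e)) = (\<Sum>x\<in>D. g x)"
proof -
  have "(+) e ` D = D"
  proof
    show "(+) e ` D \<subseteq> D" using assms by (auto intro: vec.subspace_add)
    show "D \<subseteq> (+) e ` D"
    proof
      fix y assume "y \<in> D"
      then have "y - e \<in> D" using assms by (simp add: vec.subspace_diff)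
      then show "y \<in> (+) e ` D" by (rule rev_image_eqI) simp
    qed
  qed
  then have "bij_betw (\<lambda>x. x + e) D D"
    by (simp add: add.commute[of _ e])
  then show ?thesis
    by (rule sum.reindex_bij_betw)
qed

lemma subspace_coordinate_surj:
  fixes D :: "('a::field ^ 'n) set"
  assumes "vec.subspace D" and "i \<in> code_supp D"
  shows "(\<lambda>x. x $ i) ` D = UNIV"
proof -
  obtain d where d: "d \<in> D" "d $ i \<noteq> 0"
    using assms(2) unfolding code_supp_def by blast
  have "s \<in> (\<lambda>x. x $ i) ` D" for s
  proof (rule rev_image_eqI)
    show "(s / d $ i) *s d \<in> D" using assms(1) d(1) by (rule vec.subspace_scale)
    show "s = ((s / d $ i) *s d) $ i" using d(2) by simp
  qed
  then show ?thesis by blast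
qed

lemma sum_subspace_translate_coordinate:
  fixes D :: "('a::field ^ 'n) set"
  assumes "vec.subspace D" and "i \<in> code_supp D \<or> c $ i = 0"
  shows "(\<Sum>x\<in>D. g ((x + c) $ i)) = (\<Sum>x\<in>D. g (x $ i))"
proof -
  obtain e where e: "e \<in> D" "e $ i = c $ i"
  proof (cases "i \<in> code_supp D")
    case True
    then have "c $ i \<in> (\<lambda>x. x $ i) ` D"
      using subspace_coordinate_surj[OF assms(1)] by blast
    then show ?thesis using that by (metis imageE)
  next
    case False
    then show ?thesis using that[of 0] assms by (simp add: vec.subspace_0)
  qed
  have "(\<Sum>x\<in>D. g ((x + c) $ i)) = (\<Sum>x\<in>D. g ((x + e) $ i))"
    using e(2) by simp
  also have "\<dots> = (\<Sum>x\<in>D. g (x $ i))"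
    using assms(1) e(1) by (rule sum_subspace_translate)
  finally show ?thesis .
qed

lemma sum_hweight_translate:
  fixes D :: "('a::field ^ 'n) set"
  assumes "vec.subspace D" and "vec_supp c \<subseteq> code_supp D"
  shows "(\<Sum>x\<in>D. hweight (x + c)) = (\<Sum>x\<in>D. hweight x)"
proof -
  have coord: "i \<in> code_supp D \<or> c $ i = 0" for i
    using assms(2) by (auto simp: vec_supp_eq)
  have "(\<Sum>x\<in>D. hweight (x + c)) = (\<Sum>i\<in>UNIV. \<Sum>x\<in>D. of_bool ((x + c) $ i \<noteq> 0))"
    by (simp add: hweight_eq_sum sum.swap[of _ D])
  also have "\<dots> = (\<Sum>i\<in>UNIV. \<Sum>x\<in>D. of_bool (x $ i \<noteq> 0))"
    using sum_subspace_translate_coordinate[OF assms(1) coord, where g = "\<lambda>a. of_bool (a \<noteq> 0) :: nat"]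
    by simp
  also have "\<dots> = (\<Sum>x\<in>D. hweight x)"
    unfolding hweight_eq_sum by (rule sum.swap)
  finally show ?thesis .
qed

lemma sum_hweight_subspace_constant:
  fixes D :: "('a::field ^ 'n) set"
  assumes "vec.subspace D" and "finite D" and "\<And>x. x \<in> D \<Longrightarrow> x \<noteq> 0 \<Longrightarrow> hweight x = w"
  shows "(\<Sum>x\<in>D. hweight x) = (card D - 1) * w"
proof -
  have "0 \<in> D" using assms(1) by (rule vec.subspace_0)
  then have "(\<Sum>x\<in>D. hweight x) = hweight (0 :: 'a ^ 'n) + (\<Sum>x\<in>D - {0}. hweight x)"
    by (rule sum.remove[OF assms(2)])
  also have "\<dots> = (\<Sum>x\<in>D - {0}. w)"
    using assms(3) by (simp add: hweight_eq_0_iff)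
  also have "\<dots> = (card D - 1) * w"
    using \<open>0 \<in> D\<close> assms(2) by simp
  finally show ?thesis .
qed

lemma sum_hweight_coset_constant:
  fixes D :: "('a::field ^ 'n) set"
  assumes "vec.subspace D" and "c \<notin> D" and "\<And>x. x \<in> D \<Longrightarrow> x + c \<noteq> 0 \<Longrightarrow> hweight (x + c) = w"
  shows "(\<Sum>x\<in>D. hweight (x + c)) = card D * w"
proof -
  have "x + c \<noteq> 0" if "x \<in> D" for x
  proof
    assume "x + c = 0"
    then have "c = - x" by (simp add: eq_neg_iff_add_eq_0 add.commute)
    then show False using assms(1,2) that by (simp add: vec.subspace_neg)
  qed
  then show ?thesis using assms(3) by simp
qed

theorem lemma2:
  fixes C C' :: "('a::{field,finite} ^ 'n) set" and c :: "'a ^ 'n"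
  assumes "is_subcode C" and "constant_weight C"
    and "is_subcode C'" and "C' \<subseteq> C"
    and "c \<in> C"
  shows "c \<in> C' \<longleftrightarrow> vec_supp c \<subseteq> code_supp C'"
proof
  assume "c \<in> C'"
  then show "vec_supp c \<subseteq> code_supp C'"
    by (auto simp: vec_supp_eq code_supp_def)
next
  assume supp: "vec_supp c \<subseteq> code_supp C'"
  have C: "vec.subspace C" and C': "vec.subspace C'"
    using assms(1,3) by (simp_all add: is_subcode_iff_subspace)
  obtain w where w: "\<And>x. x \<in> C \<Longrightarrow> x \<noteq> 0 \<Longrightarrow> hweight x = w"
    using assms(2) unfolding constant_weight_def by blast
  show "c \<in> C'"
  proof (rule ccontr)
    assume "c \<notin> C'"
    have coset_in_C: "x + c \<in> C" if "x \<in> C'" for x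
      using C assms(4,5) that by (auto intro: vec.subspace_add)
    have "card C' * w = (\<Sum>x\<in>C'. hweight (x + c))"
      using sum_hweight_coset_constant[OF C' \<open>c \<notin> C'\<close>] w coset_in_C by metis
    also have "\<dots> = (\<Sum>x\<in>C'. hweight x)"
      using C' supp by (rule sum_hweight_translate)
    also have "\<dots> = (card C' - 1) * w"
      using sum_hweight_subspace_constant[OF C' finite] w assms(4) by blast
    finally have "card C' * w = (card C' - 1) * w" .
    moreover have "card C' > 0"
      using vec.subspace_0[OF C'] by (auto simp: card_gt_0_iff)
    ultimately have "w = 0"
      by (cases "card C'") simp_all
    then have "c = 0"
      using w[OF assms(5)] by (auto simp: hweight_eq_0_iff)
    then show False
      using \<open>c \<notin> C'\<close> vec.subspace_0[OF C'] by simp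
  qed
qed

end
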